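(* Let $d\ge 1$. For every $R>0$ there exists a constant $C_R>0$ such that $\mu(Q(x,2r)) \le C_R\,\mu(Q(x,r))$ for all $x\in\mathbb{R}^d_+$ and $0<r\le R$. The same holds with $Q$ replaced by $B$ or by $D$.
   Context: $\mathbb{R}^d_+=(0,\infty)^d$ and $\mu$ is the measure on $\mathbb{R}^d_+$ with density $\exp(-|x|_1)$, $|x|_1=\sum_i|x_i|$. For $x\in\mathbb{R}^d_+$, $r>0$: $D(x,r)=\{y\in\mathbb{R}^d_+:|x-y|_1<r\}$, $B(x,r)=\{y\in\mathbb{R}^d_+:|x-y|_2<r\}$, $Q(x,r)=\{y\in\mathbb{R}^d_+:|x-y|_\infty<r\}$, with $|\cdot|_2$ Euclidean norm and $|\cdot|_\infty$ the max norm. *)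

theory Defs
  imports "HOL-Analysis.Analysis"
begin

text \<open>Points of R^d are modelled as vectors of type real^'n (d = CARD('n) \<ge> 1).\<close>

definition l1norm :: "real^'n \<Rightarrow> real" where
  "l1norm x = (\<Sum>i\<in>UNIV. \<bar>x $ i\<bar>)"

definition linfnorm :: "real^'n \<Rightarrow> real" where
  "linfnorm x = Max (range (\<lambda>i. \<bar>x $ i\<bar>))"

definition Rplus :: "(real^'n) set" where
  "Rplus = {x. \<forall>i. 0 < x $ i}"

definition mu :: "(real^'n) measure" where
  "mu = density lborel (\<lambda>y. indicator Rplus y * ennreal (exp (- l1norm y)))"

definition Dset :: "real^'n \<Rightarrow> real \<Rightarrow> (real^'n) set" where
  "Dset x r = {y \<in> Rplus. l1norm (x - y) < r}"

definition Bset :: "real^'n \<Rightarrow> real \<Rightarrow> (real^'n) set" where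
  "Bset x r = {y \<in> Rplus. norm (x - y) < r}"

definition Qset :: "real^'n \<Rightarrow> real \<Rightarrow> (real^'n) set" where
  "Qset x r = {y \<in> Rplus. linfnorm (x - y) < r}"

end

theory Submission
  imports Defs
begin

text \<open>The contraction \<open>y \<mapsto> midpoint x y\<close> maps each of the three balls of radius \<open>2r\<close> around
  \<open>x\<close> into the ball of radius \<open>r\<close>, stays inside \<open>R\<^sup>d\<^sub>+\<close>, and has Jacobian \<open>2\<^sup>-\<^sup>d\<close>. Since
  \<open>|midpoint x y|\<^sub>1 \<le> |y|\<^sub>1 + |x - y|\<^sub>1 / 2\<close>, the density \<open>exp(-|y|\<^sub>1)\<close> drops by at most the
  factor \<open>exp(|x - y|\<^sub>1 / 2)\<close> along the contraction, and \<open>|x - y|\<^sub>1\<close> is bounded by a multiple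
  of \<open>r \<le> R\<close>. Changing variables gives a doubling constant \<open>2\<^sup>d exp(d R)\<close>.\<close>

lemma l1norm_scaleR: "l1norm (c *\<^sub>R z) = \<bar>c\<bar> * l1norm (z::real^'n)"
  unfolding l1norm_def by (simp add: abs_mult sum_distrib_left)

lemma l1norm_triangle: "l1norm (x + y) \<le> l1norm x + l1norm (y::real^'n)"
  unfolding l1norm_def by (simp add: sum.distrib[symmetric] sum_mono abs_triangle_ineq)

lemma borel_measurable_l1norm [measurable]: "(l1norm :: real^'n \<Rightarrow> real) \<in> borel_measurable borel"
  unfolding l1norm_def by measurable

lemma borel_measurable_linfnorm [measurable]: "(linfnorm :: real^'n \<Rightarrow> real) \<in> borel_measurable borel"
  unfolding linfnorm_def by measurable

lemma linfnorm_scaleR: "linfnorm (c *\<^sub>R z) = \<bar>c\<bar> * linfnorm (z::real^'n)"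
  unfolding linfnorm_def
  by (subst mono_Max_commute[where f = "(*) \<bar>c\<bar>"])
     (auto simp: mono_def mult_left_mono abs_mult image_image)

lemma abs_component_le_linfnorm: "\<bar>z $ i\<bar> \<le> linfnorm (z::real^'n)"
  unfolding linfnorm_def by (rule Max_ge) auto

lemma l1norm_le_card_linfnorm: "l1norm z \<le> CARD('n) * linfnorm (z::real^'n)"
proof -
  have "l1norm z \<le> (\<Sum>i\<in>(UNIV::'n set). linfnorm z)"
    unfolding l1norm_def by (intro sum_mono abs_component_le_linfnorm)
  then show ?thesis by simp
qed

lemma l1norm_le_card_norm: "l1norm z \<le> CARD('n) * norm (z::real^'n)"
proof -
  have "l1norm z \<le> (\<Sum>i\<in>(UNIV::'n set). norm z)"
    unfolding l1norm_def by (intro sum_mono component_le_norm_cart)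
  then show ?thesis by simp
qed

lemma Rplus_sets_borel [measurable]: "(Rplus :: (real^'n) set) \<in> sets borel"
  unfolding Rplus_def by measurable

lemma midpoint_in_Rplus: "x \<in> Rplus \<Longrightarrow> y \<in> Rplus \<Longrightarrow> midpoint x y \<in> Rplus"
  unfolding Rplus_def midpoint_def by (auto intro: add_pos_pos)

lemma borel_measurable_midpoint [measurable]:
  "midpoint x \<in> borel_measurable (borel :: 'a::euclidean_space measure)"
  unfolding midpoint_def[abs_def] by measurable

lemma diff_midpoint: "x - midpoint x y = (1/2) *\<^sub>R (x - y :: 'a::real_vector)"
  by (simp add: midpoint_def algebra_simps flip: scaleR_2)

lemma midpoint_eq_add_half_diff: "midpoint x y = y + (1/2) *\<^sub>R (x - y :: 'a::real_vector)"
  by (simp add: midpoint_def algebra_simps flip: scaleR_2)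

lemma l1norm_midpoint_le: "l1norm (midpoint x y) \<le> l1norm y + l1norm (x - y) / 2"
  using l1norm_triangle[of y "(1/2) *\<^sub>R (x - y)"]
  by (simp add: midpoint_eq_add_half_diff l1norm_scaleR)

lemma nn_integral_lborel_midpoint:
  fixes f :: "'a::euclidean_space \<Rightarrow> ennreal"
  assumes [measurable]: "f \<in> borel_measurable borel"
  shows "(\<integral>\<^sup>+y. f (midpoint x y) \<partial>lborel) = ennreal (2 ^ DIM('a)) * (\<integral>\<^sup>+y. f y \<partial>lborel)"
proof -
  have "midpoint x (- x + 2 *\<^sub>R y) = y" for y
    by (simp add: midpoint_def scaleR_add_right)
  then show ?thesis
    by (subst lborel_affine[of 2 "- x"])
       (simp_all add: nn_integral_density nn_integral_distr nn_integral_cmult)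
qed

lemma emeasure_mu_le_midpoint:
  fixes x :: "real^'n"
  assumes x: "x \<in> Rplus" and [measurable]: "A \<in> sets borel" "B \<in> sets borel"
    and midpoint_in_B: "\<And>y. y \<in> A \<inter> Rplus \<Longrightarrow> midpoint x y \<in> B"
    and l1norm_diff_le: "\<And>y. y \<in> A \<inter> Rplus \<Longrightarrow> l1norm (x - y) \<le> 2 * K"
  shows "emeasure mu A \<le> ennreal (2 ^ CARD('n) * exp K) * emeasure mu B"
proof -
  define g where
    "g (S :: (real^'n) set) y = indicator Rplus y * ennreal (exp (- l1norm y)) * indicator S y" for S y
  have [measurable]: "g S \<in> borel_measurable borel" if [measurable]: "S \<in> sets borel" for S
    unfolding g_def by measurable
  have emeasure_mu_eq: "emeasure mu S = (\<integral>\<^sup>+y. g S y \<partial>lborel)" if "S \<in> sets borel" for S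
    unfolding mu_def g_def using that by (subst emeasure_density) auto
  have g_le: "g A y \<le> ennreal (exp K) * g B (midpoint x y)" for y
  proof (cases "y \<in> A \<inter> Rplus")
    case True
    have "l1norm (midpoint x y) \<le> l1norm y + K"
      using l1norm_midpoint_le[of x y] l1norm_diff_le[OF True] by linarith
    then have "exp (- l1norm y) \<le> exp K * exp (- l1norm (midpoint x y))"
      by (simp flip: exp_add)
    then show ?thesis
      using True midpoint_in_B[OF True] midpoint_in_Rplus[OF x]
      by (simp add: g_def ennreal_mult[symmetric])
  qed (auto simp: g_def)
  have "emeasure mu A \<le> (\<integral>\<^sup>+y. ennreal (exp K) * g B (midpoint x y) \<partial>lborel)"
    unfolding emeasure_mu_eq[OF \<open>A \<in> sets borel\<close>] by (intro nn_integral_mono g_le)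
  also have "\<dots> = ennreal (exp K) * (\<integral>\<^sup>+y. g B (midpoint x y) \<partial>lborel)"
    by (rule nn_integral_cmult) measurable
  also have "(\<integral>\<^sup>+y. g B (midpoint x y) \<partial>lborel) = ennreal (2 ^ CARD('n)) * emeasure mu B"
    by (simp add: nn_integral_lborel_midpoint emeasure_mu_eq[OF \<open>B \<in> sets borel\<close>])
  finally show ?thesis
    by (simp add: ennreal_mult' mult_ac)
qed

lemma mu_doubling_of_norm_balls:
  fixes N :: "real^'n \<Rightarrow> real"
  assumes [measurable]: "N \<in> borel_measurable borel"
    and N_scaleR: "\<And>c z. N (c *\<^sub>R z) = \<bar>c\<bar> * N z"
    and l1norm_le: "\<And>z. l1norm z \<le> K * N z" and K: "0 \<le> K"
  shows "\<forall>R>0. \<exists>C>0. \<forall>x\<in>Rplus. \<forall>r. 0 < r \<and> r \<le> R \<longrightarrow>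
           emeasure mu {y \<in> Rplus. N (x - y) < 2 * r}
             \<le> ennreal C * emeasure mu {y \<in> Rplus. N (x - y) < r}"
    (is "\<forall>R>0. \<exists>C>0. ?doubling R C")
proof (intro allI impI)
  fix R :: real
  have "emeasure mu {y \<in> Rplus. N (x - y) < 2 * r}
          \<le> ennreal (2 ^ CARD('n) * exp (K * R)) * emeasure mu {y \<in> Rplus. N (x - y) < r}"
    if x: "x \<in> Rplus" and r: "r \<le> R" for x r
  proof (rule emeasure_mu_le_midpoint[OF x])
    fix y assume y: "y \<in> {y \<in> Rplus. N (x - y) < 2 * r} \<inter> Rplus"
    then show "midpoint x y \<in> {y \<in> Rplus. N (x - y) < r}"
      using midpoint_in_Rplus[OF x] by (simp add: diff_midpoint N_scaleR)
    have "l1norm (x - y) \<le> K * N (x - y)"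
      by (rule l1norm_le)
    also have "\<dots> \<le> K * (2 * R)"
      using y r K by (intro mult_left_mono) auto
    finally show "l1norm (x - y) \<le> 2 * (K * R)"
      by simp
  qed measurable
  then show "0 < R \<Longrightarrow> \<exists>C>0. ?doubling R C"
    by (intro exI[of _ "2 ^ CARD('n) * exp (K * R)"]) auto
qed

theorem lemma2p2:
  shows "(\<forall>R>0. \<exists>C>0. \<forall>(x::real^'n)\<in>Rplus. \<forall>r. 0 < r \<and> r \<le> R \<longrightarrow>
            emeasure mu (Qset x (2*r)) \<le> ennreal C * emeasure mu (Qset x r))
       \<and> (\<forall>R>0. \<exists>C>0. \<forall>(x::real^'n)\<in>Rplus. \<forall>r. 0 < r \<and> r \<le> R \<longrightarrow>
            emeasure mu (Bset x (2*r)) \<le> ennreal C * emeasure mu (Bset x r))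
       \<and> (\<forall>R>0. \<exists>C>0. \<forall>(x::real^'n)\<in>Rplus. \<forall>r. 0 < r \<and> r \<le> R \<longrightarrow>
            emeasure mu (Dset x (2*r)) \<le> ennreal C * emeasure mu (Dset x r))"
  unfolding Qset_def Bset_def Dset_def
  by (intro conjI mu_doubling_of_norm_balls[OF borel_measurable_linfnorm linfnorm_scaleR l1norm_le_card_linfnorm]
      mu_doubling_of_norm_balls[OF borel_measurable_norm norm_scaleR l1norm_le_card_norm]
      mu_doubling_of_norm_balls[OF borel_measurable_l1norm l1norm_scaleR, of 1]) auto

end
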